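(* Let $n\ge 2$ and let $-1=x_1<x_2<\cdots<x_n=1$ be real numbers, and let $U_X=\{-1,1\}\times\{x_1,\ldots,x_n\}$. 1. For any labels $y_1,\ldots,y_n\in\mathbb{R}$, there exists $\mu\in\mathcal{M}(\mathbb{U},\mathbb{R})$ supported in $U_X$ which is optimal (attains the infimum) for the regression problem $$\inf_{\mu\in\mathcal{M}(\mathbb{U},\mathbb{R})}\int_{\mathbb{U}}|d\mu(u)| \quad\text{subject to}\quad f_\mu(x_i)=y_i\ \ \forall i\in[n].$$ 2. For any $k\ge1$ and labels $y_1,\ldots,y_n\in[k]$, there exists $\nu\in\mathcal{M}(\mathbb{U},\mathbb{R}^k)$ supported in $U_X$ which is optimal (attains the infimum) for the classification problem $$\inf_{\mu\in\mathcal{M}(\mathbb{U},\mathbb{R}^k)}\int_{\mathbb{U}}\|d\mu(u)\| \quad\text{subject to}\quad (e_{y_i}-e_l)^T f_\mu(x_i)\ge \mathbb{1}(y_i\neq l)\ \ \forall i\in[n],\ \forall l\in[k].$$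
   Context: $[n]=\{1,\ldots,n\}$; $e_j$ is the $j$-th canonical basis vector of $\mathbb{R}^k$; $\mathbb{1}(y_i\neq l)$ is $1$ if $y_i\neq l$ and $0$ otherwise. Let $\mathbb{U}=\{-1,1\}\times[-1,1]$. For $u=(s,c)\in\mathbb{U}$ and $x\in\mathbb{R}$ let $\phi_u(x)=(s(x-c))_+$, where $(t)_+=\max(t,0)$. $\mathcal{M}(\mathbb{U},\mathbb{R}^k)$ denotes the set of (finite) signed Radon measures on $\mathbb{U}$ with values in $\mathbb{R}^k$, and $f_\mu(x)=\int_{\mathbb{U}}\phi_u(x)\,d\mu(u)\in\mathbb{R}^k$. $\int_{\mathbb{U}}|d\mu(u)|$ is the total variation of a real measure and $\int_{\mathbb{U}}\|d\mu(u)\|$ is the total variation of a vector measure with respect to the Euclidean norm on $\mathbb{R}^k$. *)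

theory Defs
  imports "HOL-Analysis.Analysis"
begin

definition UU :: "(real \<times> real) set" where
  "UU = {-1, 1} \<times> {-1..1}"

definition phi :: "real \<times> real \<Rightarrow> real \<Rightarrow> real" where
  "phi u x = max (fst u * (x - snd u)) 0"

text \<open>A finite signed Radon measure on U with values in a Euclidean space 'a is
  represented (polar decomposition) as h \<cdot> M, where M is a finite positive Borel
  measure on U and h is M-integrable.\<close>
definition is_vmeasure :: "(real \<times> real) measure \<Rightarrow> (real \<times> real \<Rightarrow> 'a::euclidean_space) \<Rightarrow> bool" where
  "is_vmeasure M h \<longleftrightarrow> sets M = sets (restrict_space borel UU) \<and> finite_measure M \<and> integrable M h"

definition fmu :: "(real \<times> real) measure \<Rightarrow> (real \<times> real \<Rightarrow> 'a::euclidean_space) \<Rightarrow> real \<Rightarrow> 'a" where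
  "fmu M h x = (\<integral>u. phi u x *\<^sub>R h u \<partial>M)"

definition tv :: "(real \<times> real) measure \<Rightarrow> (real \<times> real \<Rightarrow> 'a::euclidean_space) \<Rightarrow> real" where
  "tv M h = (\<integral>u. norm (h u) \<partial>M)"

definition supported_in :: "(real \<times> real) measure \<Rightarrow> (real \<times> real \<Rightarrow> 'a::euclidean_space) \<Rightarrow> (real \<times> real) set \<Rightarrow> bool" where
  "supported_in M h S \<longleftrightarrow> (AE u in M. u \<notin> S \<longrightarrow> h u = 0)"

definition regr_feasible :: "nat \<Rightarrow> (nat \<Rightarrow> real) \<Rightarrow> (nat \<Rightarrow> real) \<Rightarrow> (real \<times> real) measure \<Rightarrow> (real \<times> real \<Rightarrow> real) \<Rightarrow> bool" where
  "regr_feasible n x y M h \<longleftrightarrow> is_vmeasure M h \<and> (\<forall>i\<in>{1..n}. fmu M h (x i) = y i)"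

definition class_feasible :: "nat \<Rightarrow> (nat \<Rightarrow> real) \<Rightarrow> (nat \<Rightarrow> 'k::finite) \<Rightarrow> (real \<times> real) measure \<Rightarrow> (real \<times> real \<Rightarrow> real ^ 'k) \<Rightarrow> bool" where
  "class_feasible n x y M h \<longleftrightarrow> is_vmeasure M h \<and>
     (\<forall>i\<in>{1..n}. \<forall>l. (axis (y i) 1 - axis l 1) \<bullet> fmu M h (x i) \<ge> (if y i \<noteq> l then 1 else 0))"

end

theory Submission
  imports Defs
begin

text \<open>A unit (s, c) whose kink c lies in a cell [x m, x (m+1)] of the data agrees at every
  data point with the convex combination (1 - t) (s, x m) + t (s, x (m+1)), where
  t = (c - x m) / (x (m+1) - x m): at a point outside the open cell, the ReLU is affine in its
  kink position on the cell. As functions of c these weights are the piecewise-linear tent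
  functions of the nodes. Averaging any feasible measure against them gives a measure on the 2n
  units {-1, 1} \<times> {x 1, ..., x n} with the same values at the data and no larger total
  variation. Both problems thus reduce to minimising the sum of the norms of the grid
  coefficients a p subject to closed constraints at the data. This coercive finite-dimensional
  problem attains its minimum once it is feasible, and it is always feasible because the grid
  units interpolate arbitrary data: the unit (1, x m) vanishes at x 1, ..., x m but not at
  x (m+1), and (-1, x n) does not vanish at x 1.\<close>

section \<open>Vector measures on the parameter space\<close>

lemma is_vmeasure_space:
  assumes "is_vmeasure M h" shows "space M = UU"
proof -
  have "sets M = sets (restrict_space borel UU)" using assms unfolding is_vmeasure_def by simp
  from sets_eq_imp_space_eq[OF this] show ?thesis by (simp add: space_restrict_space)
qed

lemma is_vmeasure_borel_measurable:
  assumes "is_vmeasure M h" and f: "f \<in> borel_measurable borel"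
  shows "f \<in> borel_measurable M"
proof -
  have sets_M: "sets M = sets (restrict_space borel UU)" using assms unfolding is_vmeasure_def by simp
  show ?thesis unfolding measurable_cong_sets[OF sets_M refl] using f by (rule measurable_restrict_space1)
qed

lemma borel_measurable_phi [measurable]: "(\<lambda>u. phi u t) \<in> borel_measurable borel"
  unfolding phi_def by (intro borel_measurable_continuous_onI continuous_intros)

lemma integral_distr_count_space_finite:
  fixes f :: "'b \<Rightarrow> 'c::{banach, second_countable_topology}"
  assumes "finite P" "q \<in> count_space P \<rightarrow>\<^sub>M N" "f \<in> borel_measurable N"
  shows "(\<integral>u. f u \<partial>distr (count_space P) N q) = (\<Sum>p\<in>P. f (q p))"
  by (simp add: integral_distr[OF assms(2,3)] lebesgue_integral_count_space_finite[OF assms(1)])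

lemma discrete_vmeasure:
  fixes a :: "'p \<Rightarrow> 'a::euclidean_space"
  assumes P: "finite P" and inj: "inj_on q P" and q_UU: "q ` P \<subseteq> UU"
  shows "\<exists>M h. is_vmeasure M h \<and> supported_in M h (q ` P)
    \<and> (\<forall>t. fmu M h t = (\<Sum>p\<in>P. phi (q p) t *\<^sub>R a p)) \<and> tv M h = (\<Sum>p\<in>P. norm (a p))"
proof -
  define N where "N = restrict_space borel UU"
  define M where "M = distr (count_space P) N q"
  define h where "h u = (\<Sum>p\<in>P. indicator {q p} u *\<^sub>R a p)" for u
  have q_meas: "q \<in> count_space P \<rightarrow>\<^sub>M N"
    unfolding measurable_count_space_eq1 N_def space_restrict_space using q_UU by auto
  have integral_M: "(\<integral>u. f u \<partial>M) = (\<Sum>p\<in>P. f (q p))" if "f \<in> borel_measurable borel"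
    for f :: "real \<times> real \<Rightarrow> 'b::euclidean_space"
    unfolding M_def N_def using P q_meas[unfolded N_def] measurable_restrict_space1[OF that]
    by (rule integral_distr_count_space_finite)
  have h_q: "h (q p) = a p" if "p \<in> P" for p
  proof -
    have "h (q p) = (\<Sum>p'\<in>P. if p' = p then a p else 0)"
      unfolding h_def using inj that by (intro sum.cong refl) (auto simp: inj_on_eq_iff indicator_def)
    then show ?thesis using P that by simp
  qed
  have h_meas: "h \<in> borel_measurable borel"
    unfolding h_def by measurable
  have "is_vmeasure M h"
    unfolding is_vmeasure_def
  proof (intro conjI)
    show "sets M = sets (restrict_space borel UU)" by (simp add: M_def N_def)
    show "finite_measure M"
      unfolding M_def by (intro finite_measure.finite_measure_distr finite_measure_count_space P q_meas)
    have "h \<in> borel_measurable N" unfolding N_def using h_meas by (rule measurable_restrict_space1)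
    then show "integrable M h"
      unfolding M_def by (subst integrable_distr_eq[OF q_meas]) (auto intro: integrable_count_space P)
  qed
  moreover have "supported_in M h (q ` P)"
  proof -
    have "h u = 0" if "u \<notin> q ` P" for u
      unfolding h_def using that by (intro sum.neutral) (auto simp: indicator_def)
    then show ?thesis unfolding supported_in_def by simp
  qed
  moreover have "fmu M h t = (\<Sum>p\<in>P. phi (q p) t *\<^sub>R a p)" for t
  proof -
    have "(\<lambda>u. phi u t *\<^sub>R h u) \<in> borel_measurable borel"
      using h_meas by measurable
    then show ?thesis unfolding fmu_def using h_q by (simp add: integral_M)
  qed
  moreover have "tv M h = (\<Sum>p\<in>P. norm (a p))"
  proof -
    have "(\<lambda>u. norm (h u)) \<in> borel_measurable borel"
      using h_meas by measurable
    then show ?thesis unfolding tv_def using h_q by (simp add: integral_M)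
  qed
  ultimately show ?thesis by (intro exI[of _ M] exI[of _ h]) simp
qed

locale partition_of_unity =
  fixes M :: "'u measure" and P :: "'p set" and w :: "'p \<Rightarrow> 'u \<Rightarrow> real"
  assumes finite_P: "finite P"
    and measurable_w: "\<And>p. p \<in> P \<Longrightarrow> w p \<in> borel_measurable M"
    and nonneg_w: "\<And>p u. p \<in> P \<Longrightarrow> u \<in> space M \<Longrightarrow> 0 \<le> w p u"
    and sum_w: "\<And>u. u \<in> space M \<Longrightarrow> (\<Sum>p\<in>P. w p u) = 1"
begin

lemma w_le_one: "p \<in> P \<Longrightarrow> u \<in> space M \<Longrightarrow> w p u \<le> 1"
  using member_le_sum[of p P "\<lambda>p. w p u"] finite_P nonneg_w sum_w by auto

lemma integrable_weighted:
  fixes h :: "'u \<Rightarrow> 'a::euclidean_space"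
  assumes "integrable M h" "p \<in> P"
  shows "integrable M (\<lambda>u. w p u *\<^sub>R h u)"
proof (rule Bochner_Integration.integrable_bound[OF assms(1)])
  show "(\<lambda>u. w p u *\<^sub>R h u) \<in> borel_measurable M"
    using measurable_w[OF assms(2)] assms(1) by measurable
  show "AE u in M. norm (w p u *\<^sub>R h u) \<le> norm (h u)"
  proof (rule AE_I2)
    fix u assume "u \<in> space M"
    then show "norm (w p u *\<^sub>R h u) \<le> norm (h u)"
      using nonneg_w[OF assms(2)] w_le_one[OF assms(2)] by (simp add: mult_left_le_one_le)
  qed
qed

lemma sum_norm_weighted_integral_le:
  fixes h :: "'u \<Rightarrow> 'a::euclidean_space"
  assumes "integrable M h"
  shows "(\<Sum>p\<in>P. norm (\<integral>u. w p u *\<^sub>R h u \<partial>M)) \<le> (\<integral>u. norm (h u) \<partial>M)"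
proof -
  have "(\<Sum>p\<in>P. norm (\<integral>u. w p u *\<^sub>R h u \<partial>M)) \<le> (\<Sum>p\<in>P. \<integral>u. norm (w p u *\<^sub>R h u) \<partial>M)"
    by (intro sum_mono integral_norm_bound)
  also have "\<dots> = (\<integral>u. (\<Sum>p\<in>P. norm (w p u *\<^sub>R h u)) \<partial>M)"
    by (intro Bochner_Integration.integral_sum[symmetric] integrable_norm integrable_weighted[OF assms])
  also have "\<dots> = (\<integral>u. norm (h u) \<partial>M)"
  proof (intro Bochner_Integration.integral_cong refl)
    fix u assume u: "u \<in> space M"
    have "(\<Sum>p\<in>P. norm (w p u *\<^sub>R h u)) = (\<Sum>p\<in>P. w p u) * norm (h u)"
      using nonneg_w[OF _ u] by (simp add: sum_distrib_right)
    then show "(\<Sum>p\<in>P. norm (w p u *\<^sub>R h u)) = norm (h u)"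
      using sum_w[OF u] by simp
  qed
  finally show ?thesis .
qed

lemma sum_scaleR_weighted_integral:
  fixes h :: "'u \<Rightarrow> 'a::euclidean_space"
  assumes "integrable M h" and f: "\<And>u. u \<in> space M \<Longrightarrow> (\<Sum>p\<in>P. w p u * c p) = f u"
  shows "(\<Sum>p\<in>P. c p *\<^sub>R (\<integral>u. w p u *\<^sub>R h u \<partial>M)) = (\<integral>u. f u *\<^sub>R h u \<partial>M)"
proof -
  have "(\<Sum>p\<in>P. c p *\<^sub>R (\<integral>u. w p u *\<^sub>R h u \<partial>M)) = (\<integral>u. (\<Sum>p\<in>P. c p *\<^sub>R w p u *\<^sub>R h u) \<partial>M)"
    using integrable_weighted[OF assms(1)]
    by (subst Bochner_Integration.integral_sum) (auto simp del: scaleR_scaleR)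
  also have "\<dots> = (\<integral>u. f u *\<^sub>R h u \<partial>M)"
    using f by (intro Bochner_Integration.integral_cong) (auto simp: scaleR_sum_left[symmetric] mult.commute)
  finally show ?thesis .
qed

end

section \<open>Minimising a sum of norms over a closed set\<close>

lemma continuous_on_fun_apply [continuous_intros]:
  "continuous_on S (\<lambda>f :: 'a \<Rightarrow> 'b::topological_space. f a)"
  by (rule continuous_on_subset[OF continuous_on_product_coordinates subset_UNIV])

lemma sum_norm_attains_min:
  fixes F :: "('p \<Rightarrow> 'a::euclidean_space) set"
  assumes P: "finite P" and "closed F" and a0: "a0 \<in> F"
    and restrict: "\<And>a. a \<in> F \<Longrightarrow> (\<lambda>p. if p \<in> P then a p else 0) \<in> F"
  shows "\<exists>a\<in>F. \<forall>b\<in>F. (\<Sum>p\<in>P. norm (a p)) \<le> (\<Sum>p\<in>P. norm (b p))"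
proof -
  \<comment> \<open>Restriction to P keeps the cost and competitors costlier than a0 are irrelevant,
    so it suffices to minimise over the compact set B \<inter> F.\<close>
  define cost where "cost a = (\<Sum>p\<in>P. norm (a p))" for a :: "'p \<Rightarrow> 'a"
  define restr where "restr a = (\<lambda>p. if p \<in> P then a p else 0)" for a :: "'p \<Rightarrow> 'a"
  define B where "B = PiE UNIV (\<lambda>p. if p \<in> P then cball (0::'a) (cost a0) else {0})"
  have cost_restr: "cost (restr a) = cost a" for a
    unfolding cost_def restr_def by (intro sum.cong) auto
  have restr_B: "restr a \<in> B" if "cost a \<le> cost a0" for a
  proof -
    have "norm (a p) \<le> cost a0" if "p \<in> P" for p
      using member_le_sum[of p P "\<lambda>p. norm (a p)"] P \<open>p \<in> P\<close> \<open>cost a \<le> cost a0\<close>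
      unfolding cost_def by auto
    then show ?thesis unfolding B_def restr_def by auto
  qed
  have "compact B"
  proof -
    have "compactin (product_topology (\<lambda>_. euclidean) UNIV) B"
      unfolding B_def compactin_PiE by (auto simp: compactin_euclidean_iff)
    then show ?thesis by (simp add: euclidean_product_topology compactin_euclidean_iff)
  qed
  then have "compact (B \<inter> F)" using \<open>closed F\<close> by (rule compact_Int_closed)
  moreover have "restr a0 \<in> B \<inter> F" using restr_B a0 restrict unfolding restr_def by auto
  moreover have "continuous_on (B \<inter> F) cost"
    unfolding cost_def by (intro continuous_intros)
  ultimately obtain a where a: "a \<in> B \<inter> F" and a_min: "\<And>b. b \<in> B \<inter> F \<Longrightarrow> cost a \<le> cost b"
    using continuous_attains_inf[of "B \<inter> F" cost] by blast
  have "cost a \<le> cost b" if "b \<in> F" for b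
  proof (cases "cost b \<le> cost a0")
    case True
    then have "cost a \<le> cost (restr b)" using a_min restr_B restrict[OF that] unfolding restr_def by auto
    then show ?thesis by (simp add: cost_restr)
  next
    case False
    have "cost a \<le> cost (restr a0)" using a_min restr_B a0 restrict unfolding restr_def by auto
    then show ?thesis using False by (simp add: cost_restr)
  qed
  then show ?thesis using a unfolding cost_def by blast
qed

section \<open>Reduction to units kinked at the data\<close>

lemma phi_kink_convex_combination:
  assumes "a < b" "a \<le> c" "c \<le> b" "s \<in> {-1, 1}" "z \<le> a \<or> b \<le> z"
  defines "t \<equiv> (c - a) / (b - a)"
  shows "phi (s, c) z = (1 - t) * phi (s, a) z + t * phi (s, b) z"
proof -
  have t: "0 \<le> t" "t \<le> 1"
    using assms by (auto simp: t_def divide_simps)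
  have "t * (b - a) = c - a"
    using assms(1) by (simp add: t_def)
  moreover have "(1 - t) * (s * (z - a)) + t * (s * (z - b)) = s * ((z - a) - t * (b - a))"
    by (simp add: algebra_simps)
  ultimately have affine: "(1 - t) * (s * (z - a)) + t * (s * (z - b)) = s * (z - c)"
    by simp
  define p q where "p = s * (z - a)" and "q = s * (z - b)"
  have "(0 \<le> p \<and> 0 \<le> q) \<or> (p \<le> 0 \<and> q \<le> 0)"
    using assms(1,4,5) by (auto simp: p_def q_def)
  then have "max ((1 - t) * p + t * q) 0 = (1 - t) * max p 0 + t * max q 0"
  proof
    assume "0 \<le> p \<and> 0 \<le> q"
    moreover have "0 \<le> (1 - t) * p + t * q"
      using calculation t by (simp add: add_nonneg_nonneg)
    ultimately show ?thesis by simp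
  next
    assume "p \<le> 0 \<and> q \<le> 0"
    moreover have "(1 - t) * p + t * q \<le> 0"
      using calculation t by (simp add: add_nonpos_nonpos mult_nonneg_nonpos)
    ultimately show ?thesis by (simp add: max_def)
  qed
  then show ?thesis
    unfolding phi_def fst_conv snd_conv affine[symmetric] p_def q_def .
qed

locale data_grid =
  fixes n :: nat and x :: "nat \<Rightarrow> real"
  assumes two_le_n: "2 \<le> n" and x_first: "x 1 = -1" and x_last: "x n = 1"
    and x_less: "\<And>i j. i \<in> {1..n} \<Longrightarrow> j \<in> {1..n} \<Longrightarrow> i < j \<Longrightarrow> x i < x j"
begin

lemma x_le: "i \<in> {1..n} \<Longrightarrow> j \<in> {1..n} \<Longrightarrow> i \<le> j \<Longrightarrow> x i \<le> x j"
  using x_less by (cases "i = j") (auto simp: le_less)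

lemma inj_on_x: "inj_on x {1..n}"
  by (metis inj_onI linorder_neqE_nat x_less order_less_irrefl)

lemma x_in_interval: "i \<in> {1..n} \<Longrightarrow> x i \<in> {-1..1}"
  using x_le[of 1 i] x_le[of i n] two_le_n x_first x_last by auto

definition grid_units :: "(real \<times> nat) set" where
  "grid_units = {-1, 1} \<times> {1..n}"

definition grid_unit :: "real \<times> nat \<Rightarrow> real \<times> real" where
  "grid_unit p = (fst p, x (snd p))"

definition grid_net :: "(real \<times> nat \<Rightarrow> 'a::euclidean_space) \<Rightarrow> real \<Rightarrow> 'a" where
  "grid_net a t = (\<Sum>p\<in>grid_units. phi (grid_unit p) t *\<^sub>R a p)"

definition grid_cost :: "(real \<times> nat \<Rightarrow> 'a::euclidean_space) \<Rightarrow> real" where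
  "grid_cost a = (\<Sum>p\<in>grid_units. norm (a p))"

lemma finite_grid_units: "finite grid_units"
  unfolding grid_units_def by simp

lemma inj_on_grid_unit: "inj_on grid_unit grid_units"
proof (rule inj_onI)
  fix p p' assume "p \<in> grid_units" "p' \<in> grid_units" "grid_unit p = grid_unit p'"
  then have "fst p = fst p'" "snd p = snd p'"
    using inj_onD[OF inj_on_x] unfolding grid_units_def grid_unit_def by auto
  then show "p = p'" by (rule prod_eqI)
qed

lemma grid_unit_image: "grid_unit ` grid_units = {-1, 1} \<times> x ` {1..n}"
  unfolding grid_units_def grid_unit_def by force

lemma grid_vmeasure:
  "\<exists>M h. is_vmeasure M h \<and> supported_in M h ({-1, 1} \<times> x ` {1..n})
     \<and> (\<forall>t. fmu M h t = grid_net a t) \<and> tv M h = grid_cost a"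
proof -
  have "grid_unit ` grid_units \<subseteq> UU"
    unfolding grid_unit_image UU_def using x_in_interval by auto
  from discrete_vmeasure[OF finite_grid_units inj_on_grid_unit this]
  show ?thesis unfolding grid_unit_image grid_net_def grid_cost_def .
qed

lemma cell_exists:
  assumes "c \<in> {-1..1}"
  obtains m where "m \<in> {1..<n}" "x m \<le> c" "c \<le> x (m + 1)"
proof -
  define A where "A = {m \<in> {1..<n}. x m \<le> c}"
  define m where "m = Max A"
  have A: "finite A" "1 \<in> A"
    unfolding A_def using two_le_n x_first assms by auto
  then have "m \<in> A" and m_max: "\<And>k. k \<in> A \<Longrightarrow> k \<le> m"
    unfolding m_def using Max_in Max_ge by blast+
  then have m: "m \<in> {1..<n}" "x m \<le> c"
    unfolding A_def by auto
  have "c \<le> x (m + 1)"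
  proof (cases "m + 1 = n")
    case True
    then show ?thesis using assms x_last by simp
  next
    case False
    then show ?thesis using m m_max[of "m + 1"] unfolding A_def by fastforce
  qed
  with m that show ?thesis by blast
qed

text \<open>The clamped proportion of the cell [x m, x (m+1)] to the left of c, extended by 1 for
  m = 0 and by 0 for m \<ge> n, so that tent j is the nodal basis function at x j of
  piecewise-linear interpolation.\<close>

definition cell_fraction :: "nat \<Rightarrow> real \<Rightarrow> real" where
  "cell_fraction m c =
     (if m = 0 then 1 else if n \<le> m then 0 else min 1 (max 0 ((c - x m) / (x (m + 1) - x m))))"

definition tent :: "nat \<Rightarrow> real \<Rightarrow> real" where
  "tent j c = cell_fraction (j - 1) c - cell_fraction j c"

lemma cell_fraction_in_cell:
  assumes m: "m \<in> {1..<n}" and c: "x m \<le> c" "c \<le> x (m + 1)"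
  shows "cell_fraction k c = (if k < m then 1 else if k = m then (c - x m) / (x (m + 1) - x m) else 0)"
proof -
  have "x m < x (m + 1)" using m by (intro x_less) auto
  consider "k = 0" | "0 < k" "k < m" | "k = m" | "m < k" "k < n" | "n \<le> k"
    by linarith
  then show ?thesis
  proof cases
    case 2
    then have "x (k + 1) \<le> x m" "x k < x (k + 1)" using m by (auto intro!: x_le x_less)
    then show ?thesis using 2 c m by (simp add: cell_fraction_def divide_simps)
  next
    case 3
    then show ?thesis using m c \<open>x m < x (m + 1)\<close> by (simp add: cell_fraction_def divide_simps)
  next
    case 4
    then have "x (m + 1) \<le> x k" "x k < x (k + 1)" using m by (auto intro!: x_le x_less)
    then show ?thesis using 4 c by (simp add: cell_fraction_def divide_simps)
  qed (use m in \<open>auto simp: cell_fraction_def\<close>)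
qed

lemma sum_tent_in_cell:
  assumes m: "m \<in> {1..<n}" and c: "x m \<le> c" "c \<le> x (m + 1)"
  defines "t \<equiv> (c - x m) / (x (m + 1) - x m)"
  shows "(\<Sum>j\<in>{1..n}. tent j c * f j) = (1 - t) * f m + t * f (m + 1)"
proof -
  have "tent j c = (if j = m then 1 - t else 0) + (if j = m + 1 then t else 0)" for j
    using m unfolding tent_def cell_fraction_in_cell[OF assms(1-3)] t_def by auto
  then have "(\<Sum>j\<in>{1..n}. tent j c * f j)
      = (\<Sum>j\<in>{1..n}. (if j = m then (1 - t) * f m else 0) + (if j = m + 1 then t * f (m + 1) else 0))"
    by (intro sum.cong) (auto simp: distrib_right)
  also have "\<dots> = (1 - t) * f m + t * f (m + 1)"
    using m by (simp add: sum.distrib)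
  finally show ?thesis .
qed

lemma tent_nonneg:
  assumes "c \<in> {-1..1}" shows "0 \<le> tent j c"
proof -
  obtain m where m: "m \<in> {1..<n}" "x m \<le> c" "c \<le> x (m + 1)"
    using cell_exists[OF assms] by blast
  have "x m < x (m + 1)" using m by (intro x_less) auto
  then have "0 \<le> (c - x m) / (x (m + 1) - x m)" "(c - x m) / (x (m + 1) - x m) \<le> 1"
    using m by (auto simp: divide_simps)
  then show ?thesis
    using m unfolding tent_def cell_fraction_in_cell[OF m] by auto
qed

lemma sum_tent:
  assumes "c \<in> {-1..1}" shows "(\<Sum>j\<in>{1..n}. tent j c) = 1"
proof -
  obtain m where m: "m \<in> {1..<n}" "x m \<le> c" "c \<le> x (m + 1)"
    using cell_exists[OF assms] by blast
  show ?thesis using sum_tent_in_cell[OF m, of "\<lambda>_. 1"] by simp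
qed

lemma sum_tent_phi:
  assumes "c \<in> {-1..1}" "s \<in> {-1, 1}" "i \<in> {1..n}"
  shows "(\<Sum>j\<in>{1..n}. tent j c * phi (s, x j) (x i)) = phi (s, c) (x i)"
proof -
  obtain m where m: "m \<in> {1..<n}" "x m \<le> c" "c \<le> x (m + 1)"
    using cell_exists[OF assms(1)] by blast
  have "x i \<le> x m \<or> x (m + 1) \<le> x i"
    using assms(3) m(1) by (cases "i \<le> m") (auto intro: x_le)
  moreover have "x m < x (m + 1)" using m by (intro x_less) auto
  ultimately show ?thesis
    using sum_tent_in_cell[OF m] phi_kink_convex_combination[OF _ m(2,3) assms(2)] by simp
qed

definition grid_weight :: "real \<times> nat \<Rightarrow> real \<times> real \<Rightarrow> real" where
  "grid_weight p u = (if fst p = fst u then tent (snd p) (snd u) else 0)"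

lemma sum_grid_weight:
  assumes "u \<in> UU"
  shows "(\<Sum>p\<in>grid_units. grid_weight p u * F p) = (\<Sum>j\<in>{1..n}. tent j (snd u) * F (fst u, j))"
proof -
  have "fst u \<in> {-1, 1}" using assms by (auto simp: UU_def)
  then show ?thesis
    unfolding grid_units_def grid_weight_def sum.cartesian_product'
    by (auto simp: if_distrib sum.If_cases)
qed

lemma grid_weight_partition_of_unity:
  assumes "is_vmeasure M h"
  shows "partition_of_unity M grid_units grid_weight"
proof
  show "finite grid_units" by (rule finite_grid_units)
  fix p
  have "grid_weight p \<in> borel_measurable borel"
    unfolding grid_weight_def tent_def cell_fraction_def borel_prod[symmetric] by measurable
  then show "grid_weight p \<in> borel_measurable M"
    by (rule is_vmeasure_borel_measurable[OF assms])
  fix u assume "u \<in> space M"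
  then have u: "u \<in> UU" using is_vmeasure_space[OF assms] by simp
  then show "0 \<le> grid_weight p u"
    unfolding grid_weight_def UU_def using tent_nonneg by auto
  have "snd u \<in> {-1..1}" using u by (auto simp: UU_def)
  then show "(\<Sum>p\<in>grid_units. grid_weight p u) = 1"
    using sum_grid_weight[OF u, of "\<lambda>_. 1"] sum_tent by simp
qed

lemma grid_reduction:
  fixes h :: "real \<times> real \<Rightarrow> 'a::euclidean_space"
  assumes "is_vmeasure M h"
  shows "\<exists>a. (\<forall>i\<in>{1..n}. grid_net a (x i) = fmu M h (x i)) \<and> grid_cost a \<le> tv M h"
proof -
  interpret partition_of_unity M grid_units grid_weight
    using assms by (rule grid_weight_partition_of_unity)
  have h: "integrable M h" using assms by (simp add: is_vmeasure_def)
  define a where "a p = (\<integral>u. grid_weight p u *\<^sub>R h u \<partial>M)" for p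
  have "grid_net a (x i) = fmu M h (x i)" if i: "i \<in> {1..n}" for i
    unfolding grid_net_def fmu_def a_def
  proof (rule sum_scaleR_weighted_integral[OF h])
    fix u assume "u \<in> space M"
    then have u: "u \<in> UU" using is_vmeasure_space[OF assms] by simp
    have "snd u \<in> {-1..1}" "fst u \<in> {-1, 1}" using u by (auto simp: UU_def)
    then show "(\<Sum>p\<in>grid_units. grid_weight p u * phi (grid_unit p) (x i)) = phi u (x i)"
      using sum_grid_weight[OF u, of "\<lambda>p. phi (grid_unit p) (x i)"] sum_tent_phi[OF _ _ i]
      by (simp add: grid_unit_def)
  qed
  moreover have "grid_cost a \<le> tv M h"
    unfolding grid_cost_def tv_def a_def by (rule sum_norm_weighted_integral_le[OF h])
  ultimately show ?thesis by blast
qed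

lemma grid_net_update:
  assumes "p \<in> grid_units"
  shows "grid_net (a(p := a p + w)) t = grid_net a t + phi (grid_unit p) t *\<^sub>R w"
proof -
  have "grid_net (a(p := a p + w)) t
      = (\<Sum>q\<in>grid_units. phi (grid_unit q) t *\<^sub>R a q + (if q = p then phi (grid_unit p) t *\<^sub>R w else 0))"
    unfolding grid_net_def by (intro sum.cong) (auto simp: scaleR_add_right)
  then show ?thesis
    using assms finite_grid_units by (simp add: sum.distrib grid_net_def)
qed

lemma grid_unit_vanishing_before:
  assumes "m < n"
  shows "\<exists>p\<in>grid_units. (\<forall>i\<in>{1..m}. phi (grid_unit p) (x i) = 0) \<and> phi (grid_unit p) (x (m + 1)) \<noteq> 0"
proof (cases "m = 0")
  case True
  have "x 1 < x n" using two_le_n by (intro x_less) auto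
  then show ?thesis
    using True two_le_n by (intro bexI[of _ "(-1, n)"]) (auto simp: grid_units_def grid_unit_def phi_def)
next
  case False
  have "x m < x (m + 1)" using False assms by (intro x_less) auto
  moreover have "x i \<le> x m" if "i \<in> {1..m}" for i using that assms by (intro x_le) auto
  ultimately show ?thesis
    using False assms by (intro bexI[of _ "(1, m)"]) (auto simp: grid_units_def grid_unit_def phi_def)
qed

lemma grid_interpolation:
  fixes v :: "nat \<Rightarrow> 'a::euclidean_space"
  shows "\<exists>a. \<forall>i\<in>{1..n}. grid_net a (x i) = v i"
proof -
  have "\<exists>a. \<forall>i\<in>{1..m}. grid_net a (x i) = v i" if "m \<le> n" for m
    using that
  proof (induction m)
    case 0
    then show ?case by simp
  next
    case (Suc m)
    then obtain a where a: "\<forall>i\<in>{1..m}. grid_net a (x i) = v i" by auto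
    obtain p where p: "p \<in> grid_units" "\<forall>i\<in>{1..m}. phi (grid_unit p) (x i) = 0"
      and p_new: "phi (grid_unit p) (x (m + 1)) \<noteq> 0"
      using grid_unit_vanishing_before[of m] Suc.prems by auto
    define w where "w = (v (m + 1) - grid_net a (x (m + 1))) /\<^sub>R phi (grid_unit p) (x (m + 1))"
    have "\<forall>i\<in>{1..Suc m}. grid_net (a(p := a p + w)) (x i) = v i"
      using a p p_new by (auto simp: grid_net_update w_def le_Suc_eq)
    then show ?case by blast
  qed
  then show ?thesis by blast
qed

lemma continuous_on_grid_net: "continuous_on S (\<lambda>a. grid_net a t)"
  unfolding grid_net_def by (intro continuous_intros)

lemma optimal_grid_coefficients:
  fixes K :: "nat \<Rightarrow> 'a::euclidean_space set"
  assumes closed_K: "\<And>i. i \<in> {1..n} \<Longrightarrow> closed (K i)"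
    and K_nonempty: "\<And>i. i \<in> {1..n} \<Longrightarrow> K i \<noteq> {}"
  obtains a where "\<forall>i\<in>{1..n}. grid_net a (x i) \<in> K i"
    and "\<And>b. \<forall>i\<in>{1..n}. grid_net b (x i) \<in> K i \<Longrightarrow> grid_cost a \<le> grid_cost b"
proof -
  define F where "F = {a :: real \<times> nat \<Rightarrow> 'a. \<forall>i\<in>{1..n}. grid_net a (x i) \<in> K i}"
  have "closed F"
  proof -
    have "F = (\<Inter>i\<in>{1..n}. (\<lambda>a. grid_net a (x i)) -` K i)" unfolding F_def by auto
    then show ?thesis by (auto intro!: closed_INT closed_vimage closed_K continuous_on_grid_net)
  qed
  have "\<forall>i\<in>{1..n}. \<exists>z. z \<in> K i" using K_nonempty by blast
  then obtain v where v: "\<forall>i\<in>{1..n}. v i \<in> K i" by metis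
  obtain a0 where "\<forall>i\<in>{1..n}. grid_net a0 (x i) = v i" using grid_interpolation by blast
  then have "a0 \<in> F" using v unfolding F_def by simp
  have "grid_net (\<lambda>p. if p \<in> grid_units then a p else 0) t = grid_net a t" for a :: "real \<times> nat \<Rightarrow> 'a" and t
    unfolding grid_net_def by (intro sum.cong) auto
  then have "(\<lambda>p. if p \<in> grid_units then a p else 0) \<in> F" if "a \<in> F" for a
    using that unfolding F_def by simp
  from sum_norm_attains_min[OF finite_grid_units \<open>closed F\<close> \<open>a0 \<in> F\<close> this]
  show ?thesis using that unfolding F_def grid_cost_def by blast
qed

theorem optimal_grid_measure:
  fixes K :: "nat \<Rightarrow> 'a::euclidean_space set"
  assumes "\<And>i. i \<in> {1..n} \<Longrightarrow> closed (K i)" and "\<And>i. i \<in> {1..n} \<Longrightarrow> K i \<noteq> {}"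
  shows "\<exists>M h. (is_vmeasure M h \<and> (\<forall>i\<in>{1..n}. fmu M h (x i) \<in> K i))
     \<and> supported_in M h ({-1, 1} \<times> x ` {1..n})
     \<and> (\<forall>M' h'. (is_vmeasure M' h' \<and> (\<forall>i\<in>{1..n}. fmu M' h' (x i) \<in> K i)) \<longrightarrow> tv M h \<le> tv M' h')"
proof -
  obtain a where a: "\<forall>i\<in>{1..n}. grid_net a (x i) \<in> K i"
    and a_min: "\<And>b. \<forall>i\<in>{1..n}. grid_net b (x i) \<in> K i \<Longrightarrow> grid_cost a \<le> grid_cost b"
    using optimal_grid_coefficients[of K, OF assms] by blast
  obtain M h where Mh: "is_vmeasure M h" "supported_in M h ({-1, 1} \<times> x ` {1..n})"
    "\<And>t. fmu M h t = grid_net a t" "tv M h = grid_cost a"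
    using grid_vmeasure[of a] by blast
  have "tv M h \<le> tv M' h'"
    if M': "is_vmeasure M' h'" and feasible: "\<forall>i\<in>{1..n}. fmu M' h' (x i) \<in> K i" for M' h'
  proof -
    obtain b where b: "\<forall>i\<in>{1..n}. grid_net b (x i) = fmu M' h' (x i)" "grid_cost b \<le> tv M' h'"
      using grid_reduction[OF M'] by blast
    then have "grid_cost a \<le> grid_cost b" using a_min feasible by simp
    then show ?thesis using b(2) Mh(4) by simp
  qed
  moreover have "\<forall>i\<in>{1..n}. fmu M h (x i) \<in> K i" using a Mh(3) by simp
  ultimately show ?thesis using Mh(1,2) by blast
qed

end

theorem proposition1:
  fixes n :: nat and x :: "nat \<Rightarrow> real"
  assumes "n \<ge> 2"
    and "x 1 = -1" and "x n = 1"
    and "\<And>i j. i \<in> {1..n} \<Longrightarrow> j \<in> {1..n} \<Longrightarrow> i < j \<Longrightarrow> x i < x j"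
  shows "(\<forall>y :: nat \<Rightarrow> real. \<exists>M h. regr_feasible n x y M h
            \<and> supported_in M h ({-1, 1} \<times> x ` {1..n})
            \<and> (\<forall>M' h'. regr_feasible n x y M' h' \<longrightarrow> tv M h \<le> tv M' h'))
       \<and> (\<forall>y :: nat \<Rightarrow> 'k::finite. \<exists>M h. class_feasible n x y M h
            \<and> supported_in M h ({-1, 1} \<times> x ` {1..n})
            \<and> (\<forall>M' h'. class_feasible n x y M' h' \<longrightarrow> tv M h \<le> tv M' h'))"
proof -
  interpret data_grid n x
    using assms by unfold_locales auto
  define K :: "(nat \<Rightarrow> 'k) \<Rightarrow> nat \<Rightarrow> (real ^ 'k) set" where
    "K y i = {w. \<forall>l. (axis (y i) 1 - axis l 1) \<bullet> w \<ge> (if y i \<noteq> l then 1 else 0)}" for y i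
  have regression: "regr_feasible n x y M h \<longleftrightarrow> is_vmeasure M h \<and> (\<forall>i\<in>{1..n}. fmu M h (x i) \<in> {y i})"
    for y M h unfolding regr_feasible_def by simp
  have classification: "class_feasible n x y M h \<longleftrightarrow> is_vmeasure M h \<and> (\<forall>i\<in>{1..n}. fmu M h (x i) \<in> K y i)"
    for y M h unfolding class_feasible_def K_def by simp
  have "closed (K y i)" for y i
    unfolding K_def by (intro closed_Collect_all closed_Collect_le continuous_intros)
  moreover have "K y i \<noteq> {}" for y i
  proof -
    have "axis (y i) 1 \<in> K y i"
      unfolding K_def by (auto simp: inner_diff_left inner_axis_axis)
    then show ?thesis by blast
  qed
  ultimately show ?thesis
    unfolding regression classification by (intro conjI allI optimal_grid_measure) auto
qed

end
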